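(* Let $\kappa$ be inaccessible, $\kappa\le\lambda$, let $C$ be a club subset of $P_\kappa\lambda$ (in Jech's sense), and let $f:P_\kappa\lambda\to P_\kappa\lambda$ satisfy $z\subsetneq f(z)\in C$ for every $z\in P_\kappa\lambda$. Then $C_f=\{x\in P_\kappa\lambda: x\cap\kappa\neq\emptyset,\ f[P_{\kappa_x}x]\subseteq P_{\kappa_x}x\}\subseteq C$. In particular every club subset of $P_\kappa\lambda$ belongs to $\mathrm{NSS}^*_{\kappa,\lambda}$.
   Context: $P_\kappa\lambda=\{x\subseteq\lambda:|x|<\kappa\}$, $\kappa_x=|x\cap\kappa|$, $P_\mu x=\{y\subseteq x:|y|<\mu\}$. A Jech club is a subset of $P_\kappa\lambda$ which is unbounded under $\subseteq$ and closed under unions of $\subseteq$-directed subsets of size $<\kappa$. $\mathrm{NSS}^*_{\kappa,\lambda}$ is the filter of sets containing some $C_g$, $g:P_\kappa\lambda\to P_\kappa\lambda$, where $C_g$ is defined as $C_f$ in the claim. *)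

theory Defs
  imports Main
begin

unbundle cardinal_syntax

(* Cardinals: card_of A = |A| (HOL's BNF cardinal library), <o = strict cardinal order.
   lambda is modelled as the universe of the type 'a, kappa as a subset K of it. *)

definition inaccessible :: "'a set \<Rightarrow> bool" where
  "inaccessible K \<longleftrightarrow>
     natLeq <o (card_of K) \<and> regularCard (card_of K) \<and>
     (\<forall>A :: 'a set. (card_of A) <o (card_of K) \<longrightarrow> card_of (Pow A) <o (card_of K))"

definition Pkl :: "'a set \<Rightarrow> 'a set set" where
  "Pkl K = {x. (card_of x) <o (card_of K)}"

(* P_mu x with mu given as the cardinality of a set M *)
definition Pmu :: "'a set \<Rightarrow> 'a set \<Rightarrow> 'a set set" where
  "Pmu M x = {y. y \<subseteq> x \<and> (card_of y) <o (card_of M)}"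

definition directed_subset :: "'a set set \<Rightarrow> bool" where
  "directed_subset D \<longleftrightarrow> D \<noteq> {} \<and> (\<forall>a\<in>D. \<forall>b\<in>D. \<exists>c\<in>D. a \<subseteq> c \<and> b \<subseteq> c)"

definition jech_club :: "'a set \<Rightarrow> 'a set set \<Rightarrow> bool" where
  "jech_club K C \<longleftrightarrow>
     C \<subseteq> Pkl K \<and>
     (\<forall>x\<in>Pkl K. \<exists>y\<in>C. x \<subseteq> y) \<and>
     (\<forall>D. D \<subseteq> C \<and> directed_subset D \<and> (card_of D) <o (card_of K) \<longrightarrow> \<Union>D \<in> C)"

(* C_f = {x in P_kappa lambda : x \<inter> kappa \<noteq> {}, f[P_{kappa_x} x] \<subseteq> P_{kappa_x} x},
   kappa_x = |x \<inter> K| *)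
definition Cf :: "'a set \<Rightarrow> ('a set \<Rightarrow> 'a set) \<Rightarrow> 'a set set" where
  "Cf K f = {x \<in> Pkl K. x \<inter> K \<noteq> {} \<and> f ` Pmu (x \<inter> K) x \<subseteq> Pmu (x \<inter> K) x}"

definition NSS_star :: "'a set \<Rightarrow> 'a set set set" where
  "NSS_star K = {A. A \<subseteq> Pkl K \<and> (\<exists>g. g ` Pkl K \<subseteq> Pkl K \<and> Cf K g \<subseteq> A)}"

end

theory Submission
  imports Defs
begin

text \<open>Let \<open>x \<in> C\<^sub>f\<close> and \<open>\<mu> = |x \<inter> \<kappa>|\<close>. The map \<open>f\<close> sends \<open>P\<^sub>\<mu> x\<close> into itself and strictly
  enlarges every set, which forces \<open>\<mu>\<close> to be infinite; hence \<open>P\<^sub>\<mu> x\<close> is closed under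
  binary unions and contains all singletons of \<open>x\<close>. So \<open>f[P\<^sub>\<mu> x]\<close> is a directed subset of
  \<open>C\<close> with union \<open>x\<close>, of size at most \<open>2\<^bsup>|x|\<^esup> < \<kappa>\<close>, and closure of \<open>C\<close> gives \<open>x \<in> C\<close>.
  For the second claim, unboundedness of a club \<open>D\<close> provides a choice function \<open>g\<close> with
  \<open>z \<subset> g z \<in> D\<close>, and the first claim applied to \<open>g\<close> yields \<open>C\<^sub>g \<subseteq> D\<close>.\<close>

definition strong_limit :: "'a set \<Rightarrow> bool" where
  "strong_limit K \<longleftrightarrow> (\<forall>A :: 'a set. |A| <o |K| \<longrightarrow> |Pow A| <o |K| )"

lemma inaccessible_imp_strong_limit: "inaccessible K \<Longrightarrow> strong_limit K"
  unfolding inaccessible_def strong_limit_def by simp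

lemma inaccessible_imp_infinite:
  assumes "inaccessible K"
  shows "infinite K"
proof -
  have "natLeq <o |K|" using assms unfolding inaccessible_def by simp
  then show ?thesis by (metis infinite_iff_natLeq_ordLeq ordLess_imp_ordLeq)
qed

lemma card_of_ordLess_finite_iff:
  assumes "finite B"
  shows "|A| <o |B| \<longleftrightarrow> finite A \<and> card A < card B"
proof (cases "finite A")
  case True
  then have "|B| \<le>o |A| \<longleftrightarrow> card B \<le> card A"
    using assms by (metis card_of_ordLeq inj_on_iff_card_le)
  then show ?thesis
    using True by (metis card_of_Well_order not_ordLeq_iff_ordLess not_le)
next
  case False
  then show ?thesis
    using assms card_of_ordLeq_finite not_ordLess_ordLeq ordLess_imp_ordLeq by blast
qed

lemma card_of_finite_ordLess_infinite:
  assumes "finite A" and "infinite B"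
  shows "|A| <o |B|"
  by (meson assms card_of_Well_order card_of_ordLeq_finite not_ordLeq_iff_ordLess)

lemma Pmu_subset_Pkl:
  assumes "x \<in> Pkl K"
  shows "Pmu M x \<subseteq> Pkl K"
  using assms card_of_mono1 ordLeq_ordLess_trans unfolding Pkl_def Pmu_def by blast

lemma singleton_in_Pmu:
  assumes "infinite M" and "t \<in> x"
  shows "{t} \<in> Pmu M x"
  using assms card_of_finite_ordLess_infinite[of "{t}"] unfolding Pmu_def by simp

lemma Un_in_Pmu:
  assumes "infinite M" and "a \<in> Pmu M x" and "b \<in> Pmu M x"
  shows "a \<union> b \<in> Pmu M x"
  using assms card_of_Un_ordLess_infinite unfolding Pmu_def by auto

text \<open>For finite \<open>M\<close>, the set \<open>M\<close> minus one point is in \<open>P\<^sub>M x\<close>, but no proper superset of it is.\<close>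

lemma infinite_if_inflationary_on_Pmu:
  assumes "a \<in> M" and "M \<subseteq> x"
    and inflationary: "\<And>z. z \<in> Pmu M x \<Longrightarrow> f z \<in> Pmu M x \<and> z \<subset> f z"
  shows "infinite M"
proof
  assume fin: "finite M"
  define z where "z = M - {a}"
  have card_M: "card M = Suc (card z)"
    using card_Suc_Diff1[OF fin \<open>a \<in> M\<close>] unfolding z_def by simp
  have "finite z" using fin unfolding z_def by simp
  then have "|z| <o |M|" using card_M by (simp add: card_of_ordLess_finite_iff[OF fin])
  moreover have "z \<subseteq> x" using \<open>M \<subseteq> x\<close> unfolding z_def by blast
  ultimately have "z \<in> Pmu M x" unfolding Pmu_def by simp
  then have "f z \<in> Pmu M x" and "z \<subset> f z" using inflationary by simp_all
  then have "|f z| <o |M|" unfolding Pmu_def by simp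
  then have "finite (f z)" and "card (f z) < card M"
    by (simp_all add: card_of_ordLess_finite_iff[OF fin])
  moreover have "card z < card (f z)"
    using \<open>z \<subset> f z\<close> \<open>finite (f z)\<close> by (rule psubset_card_mono[rotated])
  ultimately show False using card_M by simp
qed

lemma directed_image_Pmu:
  assumes "infinite M"
    and extensive: "\<And>z. z \<in> Pmu M x \<Longrightarrow> f z \<in> Pmu M x \<and> z \<subseteq> f z"
  shows "directed_subset (f ` Pmu M x)"
  unfolding directed_subset_def
proof (intro conjI ballI)
  have "{} \<in> Pmu M x"
    using \<open>infinite M\<close> card_of_finite_ordLess_infinite[of "{}"] unfolding Pmu_def by simp
  then show "f ` Pmu M x \<noteq> {}" by blast
next
  fix a b assume "a \<in> f ` Pmu M x" and "b \<in> f ` Pmu M x"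
  then have "a \<in> Pmu M x" and "b \<in> Pmu M x" using extensive by blast+
  then have "a \<union> b \<in> Pmu M x" using Un_in_Pmu[OF \<open>infinite M\<close>] by blast
  then have "a \<union> b \<subseteq> f (a \<union> b)" and "f (a \<union> b) \<in> f ` Pmu M x" using extensive by auto
  then show "\<exists>c \<in> f ` Pmu M x. a \<subseteq> c \<and> b \<subseteq> c" by blast
qed

lemma Union_image_Pmu:
  assumes "infinite M"
    and extensive: "\<And>z. z \<in> Pmu M x \<Longrightarrow> f z \<in> Pmu M x \<and> z \<subseteq> f z"
  shows "\<Union> (f ` Pmu M x) = x"
proof
  show "\<Union> (f ` Pmu M x) \<subseteq> x" using extensive unfolding Pmu_def by blast
next
  show "x \<subseteq> \<Union> (f ` Pmu M x)"
  proof
    fix t assume "t \<in> x"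
    then have "{t} \<in> Pmu M x" using singleton_in_Pmu[OF \<open>infinite M\<close>] by blast
    then show "t \<in> \<Union> (f ` Pmu M x)" using extensive by blast
  qed
qed

lemma card_of_image_Pmu_ordLess:
  assumes "strong_limit K"
    and "x \<in> Pkl K"
  shows "|f ` Pmu M x| <o |K|"
proof -
  have "Pmu M x \<subseteq> Pow x" unfolding Pmu_def by blast
  then have "|f ` Pmu M x| \<le>o |Pow x|"
    by (rule ordLeq_transitive[OF card_of_image card_of_mono1])
  moreover have "|Pow x| <o |K|"
    using \<open>x \<in> Pkl K\<close> \<open>strong_limit K\<close> unfolding Pkl_def strong_limit_def by simp
  ultimately show ?thesis by (rule ordLeq_ordLess_trans)
qed

lemma jech_club_unbounded:
  assumes "jech_club K C" and "x \<in> Pkl K"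
  obtains y where "y \<in> C" and "x \<subseteq> y"
  using assms unfolding jech_club_def by auto

lemma jech_club_Union:
  assumes "jech_club K C" and "D \<subseteq> C" and "directed_subset D" and "|D| <o |K|"
  shows "\<Union> D \<in> C"
  using assms unfolding jech_club_def by simp

lemma Cf_subset_jech_club:
  assumes "strong_limit K"
    and club: "jech_club K C"
    and f: "\<forall>z \<in> Pkl K. z \<subset> f z \<and> f z \<in> C"
  shows "Cf K f \<subseteq> C"
proof
  fix x assume "x \<in> Cf K f"
  then have x: "x \<in> Pkl K" and "x \<inter> K \<noteq> {}"
    and closed: "f ` Pmu (x \<inter> K) x \<subseteq> Pmu (x \<inter> K) x"
    unfolding Cf_def by auto
  let ?D = "Pmu (x \<inter> K) x"
  have D_Pkl: "?D \<subseteq> Pkl K" using x by (rule Pmu_subset_Pkl)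
  have inflationary: "f z \<in> ?D \<and> z \<subset> f z" if "z \<in> ?D" for z
  proof
    show "f z \<in> ?D" using closed that by (rule subsetD[OF _ imageI])
    show "z \<subset> f z" using f subsetD[OF D_Pkl that] by simp
  qed
  have extensive: "f z \<in> ?D \<and> z \<subseteq> f z" if "z \<in> ?D" for z
    using inflationary[OF that] by (simp add: psubset_imp_subset)
  obtain a where "a \<in> x \<inter> K" using \<open>x \<inter> K \<noteq> {}\<close> by blast
  then have "infinite (x \<inter> K)"
    using Int_lower1 inflationary by (rule infinite_if_inflationary_on_Pmu)
  have "\<Union> (f ` ?D) \<in> C"
  proof (rule jech_club_Union[OF club])
    show "f ` ?D \<subseteq> C" using f D_Pkl by blast
    show "directed_subset (f ` ?D)"
      using \<open>infinite (x \<inter> K)\<close> extensive by (rule directed_image_Pmu)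
    show "|f ` ?D| <o |K|" using \<open>strong_limit K\<close> x by (rule card_of_image_Pmu_ordLess)
  qed
  moreover have "\<Union> (f ` ?D) = x"
    using \<open>infinite (x \<inter> K)\<close> extensive by (rule Union_image_Pmu)
  ultimately show "x \<in> C" by simp
qed

lemma jech_club_strict_extension:
  assumes "infinite K" and "jech_club K D" and "z \<in> Pkl K"
  obtains y where "y \<in> D" and "z \<subset> y"
proof -
  have z: "|z| <o |K|" using \<open>z \<in> Pkl K\<close> unfolding Pkl_def by simp
  have "\<not> K \<subseteq> z"
  proof
    assume "K \<subseteq> z"
    then have "|K| \<le>o |z|" by (rule card_of_mono1)
    with z show False using not_ordLess_ordLeq by blast
  qed
  then obtain a where "a \<notin> z" by blast
  have "|{a}| <o |K|" using \<open>infinite K\<close> by (simp add: card_of_finite_ordLess_infinite)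
  then have "|{a} \<union> z| <o |K|"
    using card_of_Un_ordLess_infinite[OF \<open>infinite K\<close> _ z] by blast
  then have "insert a z \<in> Pkl K" unfolding Pkl_def by simp
  with \<open>jech_club K D\<close> obtain y where "y \<in> D" and "insert a z \<subseteq> y"
    by (rule jech_club_unbounded)
  then show ?thesis using \<open>a \<notin> z\<close> that by blast
qed

lemma jech_club_in_NSS_star:
  assumes "strong_limit K"
    and "infinite K" and club: "jech_club K D"
  shows "D \<in> NSS_star K"
proof -
  have "\<forall>z \<in> Pkl K. \<exists>y. z \<subset> y \<and> y \<in> D"
    using jech_club_strict_extension[OF \<open>infinite K\<close> club] by blast
  then obtain g where g: "\<forall>z \<in> Pkl K. z \<subset> g z \<and> g z \<in> D"
    by (rule bchoice[THEN exE])
  have "D \<subseteq> Pkl K" using club unfolding jech_club_def by simp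
  moreover have "g ` Pkl K \<subseteq> Pkl K" using g \<open>D \<subseteq> Pkl K\<close> by blast
  moreover have "Cf K g \<subseteq> D" using \<open>strong_limit K\<close> club g by (rule Cf_subset_jech_club)
  ultimately show ?thesis unfolding NSS_star_def by blast
qed

theorem lemma2p4:
  fixes K :: "'a set" and C :: "'a set set" and f :: "'a set \<Rightarrow> 'a set"
  assumes "inaccessible K"
    and "jech_club K C"
    and "\<forall>z\<in>Pkl K. z \<subset> f z \<and> f z \<in> C"
  shows "Cf K f \<subseteq> C \<and> (\<forall>D. jech_club K D \<longrightarrow> D \<in> NSS_star K)"
proof -
  have "strong_limit K" and "infinite K"
    using \<open>inaccessible K\<close> by (rule inaccessible_imp_strong_limit, rule inaccessible_imp_infinite)
  then show ?thesis
    using Cf_subset_jech_club[OF \<open>strong_limit K\<close> assms(2,3)] jech_club_in_NSS_star by blast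
qed

end
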